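(* Let $\bm H$ be a finite-dimensional Hilbert space, let $\rho_{\rm i}=\sum_a p_{\rm i}(a)|\psi_a\rangle\langle\psi_a|$ and $\rho_0=\sum_b p_0(b)|\phi_b\rangle\langle\phi_b|$ be density operators with orthonormal eigenbases $\{|\psi_a\rangle\}$, $\{|\phi_b\rangle\}$. Let $H(t)$, $0\le t\le\tau$, be a (continuous) family of Hermitian operators on $\bm H$, $U:=\mathrm{T}\exp(-\mathrm{i}\int_0^\tau H(t)\,dt)$ the time-ordered exponential, and $\rho_{\rm f}:=U\rho_{\rm i}U^\dagger$. Let $\Theta$ be an anti-unitary operator on $\bm H$ with $\Theta^2=I$, set $\tilde H(t):=\Theta H(t)\Theta$, $\tilde U:=\mathrm{T}\exp(-\mathrm{i}\int_0^\tau\tilde H(\tau-t)\,dt)$, $|\tilde\psi_a\rangle:=\Theta|\psi_a\rangle$, $|\tilde\phi_b\rangle:=\Theta|\phi_b\rangle$. Define the forward and backward joint probabilities $$p(a,b):=|\langle\phi_b|U|\psi_a\rangle|^2\,p_{\rm i}(a),\qquad \tilde p(b,a):=|\langle\tilde\psi_a|\tilde U|\tilde\phi_b\rangle|^2\,p_0(b).$$ Then $$\sum_{a,b}p(a,b)\ln\frac{p(a,b)}{\tilde p(b,a)}=S(\rho_{\rm f}\|\rho_0).$$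
   Context: An anti-unitary operator is an anti-linear map preserving inner products up to complex conjugation. Conventions: $0\ln(0/x)=0$ and $x\ln(x/0)=+\infty$ for $x>0$. The quantum relative entropy is $S(\rho\|\sigma):=\mathrm{tr}[\rho\ln\rho]-\mathrm{tr}[\rho\ln\sigma]$, defined as $+\infty$ if there is $|\psi\rangle$ with $\sigma|\psi\rangle=0$ and $\langle\psi|\rho|\psi\rangle\ne0$. *)

theory Defs
  imports "HOL-Analysis.Analysis"
begin

text \<open>Finite-dimensional Hilbert space: complex^'n with the standard inner product
  (antilinear in the first argument). Operators are matrices complex^'n^'n.\<close>

definition cinner :: "complex^'n \<Rightarrow> complex^'n \<Rightarrow> complex" where
  "cinner x y = (\<Sum>i\<in>UNIV. cnj (x$i) * y$i)"

definition adjoint_mat :: "complex^'n^'n \<Rightarrow> complex^'n^'n" where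
  "adjoint_mat A = (\<chi> i j. cnj (A$j$i))"

definition hermitian :: "complex^'n^'n \<Rightarrow> bool" where
  "hermitian A \<longleftrightarrow> adjoint_mat A = A"

definition ctrace :: "complex^'n^'n \<Rightarrow> complex" where
  "ctrace A = (\<Sum>i\<in>UNIV. A$i$i)"

definition smult_mat :: "complex \<Rightarrow> complex^'n^'n \<Rightarrow> complex^'n^'n" where
  "smult_mat c A = (\<chi> i j. c * A$i$j)"

definition outer :: "complex^'n \<Rightarrow> complex^'n \<Rightarrow> complex^'n^'n" where
  "outer x y = (\<chi> i j. x$i * cnj (y$j))"

definition cmatrix :: "(complex^'n \<Rightarrow> complex^'n) \<Rightarrow> complex^'n^'n" where
  "cmatrix f = (\<chi> i j. (f (axis j 1))$i)"

definition orthonormal_basis :: "('n::finite \<Rightarrow> complex^'n) \<Rightarrow> bool" where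
  "orthonormal_basis e \<longleftrightarrow> (\<forall>a b. cinner (e a) (e b) = (if a = b then 1 else 0))"

definition spectral_op :: "('n::finite \<Rightarrow> real) \<Rightarrow> ('n \<Rightarrow> complex^'n) \<Rightarrow> complex^'n^'n" where
  "spectral_op p e = (\<Sum>a\<in>UNIV. smult_mat (complex_of_real (p a)) (outer (e a) (e a)))"

definition antiunitary :: "(complex^'n \<Rightarrow> complex^'n) \<Rightarrow> bool" where
  "antiunitary \<Theta> \<longleftrightarrow>
     (\<forall>x y. \<Theta> (x + y) = \<Theta> x + \<Theta> y) \<and>
     (\<forall>c x. \<Theta> (c *s x) = cnj c *s \<Theta> x) \<and>
     (\<forall>x y. cinner (\<Theta> x) (\<Theta> y) = cnj (cinner x y)) \<and>
     bij \<Theta>"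

text \<open>Uf is the propagator of the time-dependent Hamiltonian H on [0,tau]:
  Uf(0) = I and dUf/dt = -i H(t) Uf(t); then Uf(tau) = T exp(-i int_0^tau H(t) dt).\<close>
definition propagator :: "(real \<Rightarrow> complex^'n^'n) \<Rightarrow> real \<Rightarrow> (real \<Rightarrow> complex^'n^'n) \<Rightarrow> bool" where
  "propagator H \<tau> Uf \<longleftrightarrow> Uf 0 = mat 1 \<and>
     (\<forall>t\<in>{0..\<tau>}. (Uf has_vector_derivative smult_mat (- \<i>) (H t ** Uf t)) (at t within {0..\<tau>}))"

text \<open>Functional calculus for a Hermitian matrix via an orthonormal eigenbasis
  (independent of the choice of eigenbasis).\<close>
definition mfun :: "(real \<Rightarrow> real) \<Rightarrow> complex^'n^'n \<Rightarrow> complex^'n^'n" where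
  "mfun f A = (let (e, l) = (SOME (e, l). orthonormal_basis e \<and>
                   (\<forall>k. A *v e k = complex_of_real (l k) *s e k))
               in (\<Sum>k\<in>UNIV. smult_mat (complex_of_real (f (l k))) (outer (e k) (e k))))"

text \<open>With ln 0 = 0 in Isabelle, x*ln x gives 0 ln 0 = 0,
  and ln sigma is taken on the support of sigma (kernel contributes 0).\<close>
definition rel_entropy :: "complex^'n^'n \<Rightarrow> complex^'n^'n \<Rightarrow> ereal" where
  "rel_entropy \<rho> \<sigma> =
     (if \<exists>\<psi>. \<sigma> *v \<psi> = 0 \<and> cinner \<psi> (\<rho> *v \<psi>) \<noteq> 0 then \<infinity>
      else ereal (Re (ctrace (mfun (\<lambda>x. x * ln x) \<rho>) - ctrace (\<rho> ** mfun ln \<sigma>))))"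

definition kl_term :: "real \<Rightarrow> real \<Rightarrow> ereal" where
  "kl_term x y = (if x = 0 then 0 else if y = 0 then \<infinity> else ereal (x * ln (x / y)))"

end

theory Submission imports Defs begin

text \<open>
  Conjugation by the unitary \<open>U\<close> turns \<open>\<rho>\<^sub>i\<close> into \<open>\<rho>\<^sub>f = \<Sum>\<^sub>a p\<^sub>i(a) |U\<psi>\<^sub>a\<rangle>\<langle>U\<psi>\<^sub>a|\<close>, and the
  time-reversal symmetry of the dynamics gives \<open>\<langle>\<Theta>x|\<tilde>U \<Theta>y\<rangle> = \<langle>y|U x\<rangle>\<close>, so the backward
  transition probabilities coincide with the forward ones \<open>n(a,b) = |\<langle>\<phi>\<^sub>b|U\<psi>\<^sub>a\<rangle>|\<^sup>2\<close>.
  The claim then becomes a statement about two spectral decompositions: the rows of \<open>n\<close>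
  sum to one, so \<open>\<Sum>\<^sub>a\<^sub>,\<^sub>b n p\<^sub>i(a) ln (n p\<^sub>i(a) / n p\<^sub>0(b)) = \<Sum>\<^sub>a p\<^sub>i ln p\<^sub>i - \<Sum>\<^sub>b ln p\<^sub>0(b) \<langle>\<phi>\<^sub>b|\<rho>\<^sub>f \<phi>\<^sub>b\<rangle>\<close>,
  which is \<open>tr \<rho>\<^sub>f ln \<rho>\<^sub>f - tr \<rho>\<^sub>f ln \<rho>\<^sub>0\<close>; both sides are infinite exactly when some
  \<open>\<phi>\<^sub>b\<close> with \<open>p\<^sub>0(b) = 0\<close> overlaps some \<open>U\<psi>\<^sub>a\<close> with \<open>p\<^sub>i(a) > 0\<close>.
\<close>

lemma cinner_add_left: "cinner (x + y) z = cinner x z + cinner y z"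
  by (simp add: cinner_def sum.distrib distrib_right)

lemma cinner_add_right: "cinner z (x + y) = cinner z x + cinner z y"
  by (simp add: cinner_def sum.distrib distrib_left)

lemma cinner_smult_left: "cinner (c *s x) y = cnj c * cinner x y"
  by (simp add: cinner_def sum_distrib_left mult.assoc)

lemma cinner_smult_right: "cinner x (c *s y) = c * cinner x y"
  by (simp add: cinner_def sum_distrib_left mult.left_commute)

lemma scaleR_eq_smult: "r *\<^sub>R (x::complex^'n) = complex_of_real r *s x"
  unfolding vec_eq_iff vector_scaleR_component vector_smult_component by (simp add: scaleR_conv_of_real)

lemma cinner_scaleR_left: "cinner (r *\<^sub>R x) y = of_real r * cinner x y"
  by (simp add: scaleR_eq_smult cinner_smult_left)

lemma cinner_scaleR_right: "cinner x (r *\<^sub>R y) = of_real r * cinner x y"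
  by (simp add: scaleR_eq_smult cinner_smult_right)

lemma cinner_zero_right [simp]: "cinner y 0 = 0"
  by (simp add: cinner_def)

lemma cinner_sum_right: "cinner y (\<Sum>k\<in>A. f k) = (\<Sum>k\<in>A. cinner y (f k))"
  by (induct A rule: infinite_finite_induct) (simp_all add: cinner_add_right)

lemma cinner_commute_cnj: "cnj (cinner x y) = cinner y x"
  by (simp add: cinner_def mult.commute)

lemma cinner_adjoint: "cinner x (A *v y) = cinner (adjoint_mat A *v x) y"
  unfolding cinner_def adjoint_mat_def matrix_vector_mult_def
  by (simp add: sum_distrib_left sum_distrib_right mult_ac) (rule sum.swap)

lemma cinner_hermitian: "hermitian A \<Longrightarrow> cinner x (A *v y) = cinner (A *v x) y"
  by (simp add: cinner_adjoint hermitian_def)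

lemma bounded_bilinear_cinner: "bounded_bilinear cinner"
proof -
  have "bilinear cinner"
    unfolding bilinear_def
    by (auto intro!: linearI simp: cinner_add_left cinner_add_right cinner_scaleR_left
        cinner_scaleR_right) (simp_all add: scaleR_conv_of_real)
  then show ?thesis using bilinear_conv_bounded_bilinear by blast
qed

lemma bounded_linear_matrix_vector_mult_left: "bounded_linear (\<lambda>M::complex^'n^'m. M *v y)"
  unfolding linear_conv_bounded_linear[symmetric]
  by (rule linearI) (auto simp: vec_eq_iff matrix_vector_mult_def sum.distrib distrib_right scaleR_sum_right)

lemma smult_mat_mult_vector: "smult_mat c M *v y = c *s (M *v y)"
  by (simp add: smult_mat_def matrix_vector_mult_def vec_eq_iff sum_distrib_left mult.assoc)

lemma sum_matrix_vector_mult: "(\<Sum>k\<in>A. M k) *v x = (\<Sum>k\<in>A. M k *v (x::complex^'n))"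
  by (induct A rule: infinite_finite_induct) (simp_all add: matrix_vector_mult_add_rdistrib)

lemma matrix_vector_mult_sum: "M *v (\<Sum>k\<in>A. v k) = (\<Sum>k\<in>A. M *v (v k::complex^'n))"
  by (induct A rule: infinite_finite_induct) (simp_all add: matrix_vector_right_distrib)

lemma matrix_mult_sum: "R ** (\<Sum>k\<in>A. M k) = (\<Sum>k\<in>A. R ** (M k::complex^'n^'n))"
  by (induct A rule: infinite_finite_induct) (simp_all add: matrix_add_ldistrib)

lemma outer_mult_vector: "outer x y *v z = cinner y z *s x"
  by (simp add: outer_def cinner_def matrix_vector_mult_def vec_eq_iff sum_distrib_left mult_ac)

lemma cmatrix_mult_vector:
  assumes add: "\<And>x y. f (x + y) = f x + f y" and hom: "\<And>c x. f (c *s x) = c *s f x"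
  shows "cmatrix f *v x = f (x::complex^'n)"
proof -
  have f_sum: "f (\<Sum>j\<in>A. g j) = (\<Sum>j\<in>A. f (g j))" for A and g :: "'n \<Rightarrow> complex^'n"
    using hom[of 0 0] by (induct A rule: infinite_finite_induct) (simp_all add: add)
  have "f x = f (\<Sum>j\<in>UNIV. x$j *s axis j 1)" by (simp add: basis_expansion)
  also have "\<dots> = (\<Sum>j\<in>UNIV. x$j *s f (axis j 1))" by (simp add: f_sum hom)
  finally show ?thesis
    by (simp add: vec_eq_iff cmatrix_def matrix_vector_mult_def mult.commute)
qed

lemma antiunitary_scaleR: "antiunitary T \<Longrightarrow> T (r *\<^sub>R x) = r *\<^sub>R T x"
  by (simp add: antiunitary_def scaleR_eq_smult)

lemma antiunitary_bounded_linear: "antiunitary T \<Longrightarrow> bounded_linear T"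
  unfolding linear_conv_bounded_linear[symmetric]
  by (rule linearI) (auto simp: antiunitary_def antiunitary_scaleR)

lemma cmatrix_antiunitary_conj:
  assumes "antiunitary T"
  shows "cmatrix (\<lambda>x. T (A *v T x)) *v w = T (A *v T w)"
  using assms
  by (intro cmatrix_mult_vector)
    (simp_all add: antiunitary_def matrix_vector_right_distrib vector_scalar_commute)

section \<open>Orthonormal bases and spectral operators\<close>

lemma orthonormal_basis_resolution:
  assumes "orthonormal_basis (e::'n::finite \<Rightarrow> complex^'n)"
  shows "(\<Sum>k\<in>UNIV. outer (e k) (e k)) = mat 1"
proof -
  define E :: "complex^'n^'n" where "E = (\<chi> i k. e k $ i)"
  have "adjoint_mat E ** E = mat 1"
    using assms unfolding vec_eq_iff
    by (auto simp: E_def adjoint_mat_def matrix_matrix_mult_def mat_def orthonormal_basis_def cinner_def)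
  then have "E ** adjoint_mat E = mat 1" using matrix_left_right_inverse by blast
  then show ?thesis
    by (simp add: vec_eq_iff E_def adjoint_mat_def matrix_matrix_mult_def outer_def)
qed

lemma orthonormal_basis_expansion:
  assumes "orthonormal_basis e"
  shows "x = (\<Sum>k\<in>UNIV. cinner (e k) x *s e k)"
  using sum_matrix_vector_mult[of "\<lambda>k. outer (e k) (e k)" UNIV x]
  by (simp add: orthonormal_basis_resolution[OF assms] outer_mult_vector)

lemma parseval:
  assumes "orthonormal_basis e"
  shows "complex_of_real (\<Sum>k\<in>UNIV. (cmod (cinner (e k) x))\<^sup>2) = cinner x x"
proof -
  have "cinner x x = cinner x (\<Sum>k\<in>UNIV. cinner (e k) x *s e k)"
    using orthonormal_basis_expansion[OF assms, of x] by simp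
  also have "\<dots> = (\<Sum>k\<in>UNIV. cinner (e k) x * cnj (cinner (e k) x))"
    by (simp add: cinner_sum_right cinner_smult_right cinner_commute_cnj)
  finally show ?thesis by (simp only: of_real_sum complex_norm_square)
qed

lemma matrix_eq_on_orthonormal_basis:
  assumes e: "orthonormal_basis e" and eq: "\<And>k. M *v e k = N *v e k"
  shows "M = (N::complex^'n^'n)"
proof -
  have "M *v x = N *v x" for x
  proof -
    have "M *v (\<Sum>k\<in>UNIV. cinner (e k) x *s e k) = N *v (\<Sum>k\<in>UNIV. cinner (e k) x *s e k)"
      by (simp add: matrix_vector_mult_sum vector_scalar_commute eq)
    then show ?thesis using orthonormal_basis_expansion[OF e, of x] by simp
  qed
  then show ?thesis by (simp add: matrix_eq)
qed

lemma spectral_op_mult_vector: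
  "spectral_op p e *v x = (\<Sum>a\<in>UNIV. (of_real (p a) * cinner (e a) x) *s e a)"
  by (simp add: spectral_op_def sum_matrix_vector_mult smult_mat_mult_vector outer_mult_vector)

lemma cinner_spectral_op:
  assumes "orthonormal_basis e"
  shows "cinner (e k) (spectral_op p e *v y) = of_real (p k) * cinner (e k) y"
  using assms
  by (simp add: spectral_op_mult_vector cinner_sum_right cinner_smult_right orthonormal_basis_def
      if_distrib[of "\<lambda>x. _ * x"] cong: if_cong)

lemma cinner_spectral_op_diag:
  "cinner x (spectral_op p e *v x) = of_real (\<Sum>a\<in>UNIV. p a * (cmod (cinner x (e a)))\<^sup>2)"
proof -
  have "cinner x (spectral_op p e *v x)
      = (\<Sum>a\<in>UNIV. of_real (p a) * (cinner x (e a) * cnj (cinner x (e a))))"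
    by (simp add: spectral_op_mult_vector cinner_sum_right cinner_smult_right cinner_commute_cnj mult_ac)
  then show ?thesis by (simp only: of_real_sum of_real_mult complex_norm_square)
qed

lemma spectral_op_eigen:
  assumes "orthonormal_basis e"
  shows "spectral_op p e *v e k = of_real (p k) *s e k"
  using assms
  by (simp add: spectral_op_mult_vector orthonormal_basis_def if_distrib[of "\<lambda>x. _ * x"]
      if_distrib[of "\<lambda>x. x *s _"] cong: if_cong)

lemma spectral_op_of_eigenbasis:
  assumes e: "orthonormal_basis e" and ev: "\<And>k. A *v e k = of_real (l k) *s e k"
  shows "A = spectral_op l e"
  by (rule matrix_eq_on_orthonormal_basis[OF e]) (simp add: ev spectral_op_eigen[OF e])

text \<open>Eigenvectors from different eigenbases overlap only if their eigenvalues agree, so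
  applying \<open>f\<close> to the eigenvalues does not depend on the eigenbasis.\<close>
lemma spectral_op_eigenbasis_unique:
  assumes e: "orthonormal_basis e" and ev: "\<And>k. A *v e k = of_real (l k) *s e k"
    and e': "orthonormal_basis e'" and ev': "\<And>k. A *v e' k = of_real (l' k) *s e' k"
  shows "spectral_op (\<lambda>k. f (l k)) e = spectral_op (\<lambda>k. f (l' k)) e'"
proof (rule matrix_eq_on_orthonormal_basis[OF e'])
  fix j
  have overlap: "(of_real (f (l k)) * cinner (e k) (e' j)) *s e k
      = (of_real (f (l' j)) * cinner (e k) (e' j)) *s e k" for k
  proof (cases "cinner (e k) (e' j) = 0")
    case False
    have "of_real (l k) * cinner (e k) (e' j) = cinner (e k) (A *v e' j)"
      by (simp add: spectral_op_of_eigenbasis[OF e ev] cinner_spectral_op[OF e])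
    also have "\<dots> = of_real (l' j) * cinner (e k) (e' j)"
      by (simp add: ev' cinner_smult_right)
    finally show ?thesis using False by simp
  qed simp
  have "spectral_op (\<lambda>k. f (l k)) e *v e' j
      = of_real (f (l' j)) *s (\<Sum>k\<in>UNIV. cinner (e k) (e' j) *s e k)"
    by (simp add: spectral_op_mult_vector overlap sum_cmul[symmetric] vector_smult_assoc)
  also have "\<dots> = spectral_op (\<lambda>k. f (l' k)) e' *v e' j"
    by (simp only: orthonormal_basis_expansion[OF e, symmetric] spectral_op_eigen[OF e'])
  finally show "spectral_op (\<lambda>k. f (l k)) e *v e' j = spectral_op (\<lambda>k. f (l' k)) e' *v e' j" .
qed

lemma mfun_spectral_op:
  assumes e: "orthonormal_basis e"
  shows "mfun f (spectral_op l e) = spectral_op (\<lambda>k. f (l k)) e"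
proof -
  define P where "P = (\<lambda>(e'::'a \<Rightarrow> complex^'a, l'::'a \<Rightarrow> real). orthonormal_basis e' \<and>
                   (\<forall>k. spectral_op l e *v e' k = complex_of_real (l' k) *s e' k))"
  have "P (e, l)" using e by (simp add: P_def spectral_op_eigen)
  then have "P (SOME x. P x)" by (rule someI)
  moreover obtain e' l' where el: "(SOME x. P x) = (e', l')" by (cases "SOME x. P x") auto
  ultimately have "orthonormal_basis e'" "\<And>k. spectral_op l e *v e' k = of_real (l' k) *s e' k"
    by (auto simp: P_def)
  moreover have "mfun f (spectral_op l e) = spectral_op (\<lambda>k. f (l' k)) e'"
    using el unfolding mfun_def spectral_op_def P_def by simp
  ultimately show ?thesis
    using spectral_op_eigenbasis_unique[OF _ _ e spectral_op_eigen[OF e]] by metis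
qed

lemma spectral_op_conj:
  "A ** spectral_op p e ** adjoint_mat A = spectral_op p (\<lambda>a. A *v e a)"
proof -
  have "adjoint_mat (adjoint_mat A) = A" by (simp add: adjoint_mat_def vec_eq_iff)
  then show ?thesis
    unfolding matrix_eq
    by (simp add: matrix_vector_mul_assoc[symmetric] spectral_op_mult_vector matrix_vector_mult_sum
        vector_scalar_commute cinner_adjoint)
qed

lemma ctrace_sum: "ctrace (\<Sum>k\<in>A. M k) = (\<Sum>k\<in>A. ctrace (M k))"
  unfolding ctrace_def by (simp add: sum.swap[of _ A])

lemma ctrace_smult_mat: "ctrace (smult_mat c M) = c * ctrace M"
  by (simp add: ctrace_def smult_mat_def sum_distrib_left)

lemma ctrace_spectral_op:
  assumes "orthonormal_basis e"
  shows "ctrace (spectral_op p e) = of_real (\<Sum>a\<in>UNIV. p a)"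
proof -
  have "ctrace (outer x y) = cinner y x" for x y :: "complex^'a"
    by (simp add: ctrace_def outer_def cinner_def mult.commute)
  with assms show ?thesis
    by (simp add: spectral_op_def ctrace_sum ctrace_smult_mat orthonormal_basis_def)
qed

lemma ctrace_mult_outer: "ctrace (R ** outer x y) = cinner y (R *v x)"
  by (simp add: ctrace_def outer_def cinner_def matrix_matrix_mult_def matrix_vector_mult_def
      sum_distrib_left mult_ac)

lemma matrix_mult_smult_mat: "R ** smult_mat c M = smult_mat c (R ** M)"
  by (simp add: smult_mat_def matrix_matrix_mult_def vec_eq_iff sum_distrib_left mult_ac)

lemma ctrace_mult_spectral_op:
  "ctrace (R ** spectral_op q e) = (\<Sum>b\<in>UNIV. of_real (q b) * cinner (e b) (R *v e b))"
  by (simp add: spectral_op_def matrix_mult_sum matrix_mult_smult_mat ctrace_sum ctrace_smult_mat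
      ctrace_mult_outer)

section \<open>Propagators\<close>

lemma propagator_has_vector_derivative:
  assumes "propagator H \<tau> U" "t \<in> {0..\<tau>}"
  shows "((\<lambda>s. U s *v y) has_vector_derivative (- \<i>) *s (H t *v (U t *v y))) (at t within {0..\<tau>})"
proof -
  have "(U has_vector_derivative smult_mat (- \<i>) (H t ** U t)) (at t within {0..\<tau>})"
    using assms by (auto simp: propagator_def)
  from bounded_linear.has_vector_derivative[OF bounded_linear_matrix_vector_mult_left this, of y]
  show ?thesis by (simp add: smult_mat_mult_vector matrix_vector_mul_assoc)
qed

lemma propagator_reversed_has_vector_derivative:
  assumes "propagator H \<tau> U" "t \<in> {0..\<tau>}"
  shows "((\<lambda>s. U (\<tau> - s) *v y) has_vector_derivative \<i> *s (H (\<tau> - t) *v (U (\<tau> - t) *v y)))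
           (at t within {0..\<tau>})"
proof -
  have reflect: "(\<lambda>s. \<tau> - s) ` {0..\<tau>} = {0..\<tau>}"
    by (auto intro!: image_eqI[where x="\<tau> - _"])
  have "((\<lambda>s. \<tau> - s) has_vector_derivative (-1)) (at t within {0..\<tau>})"
    by (auto intro!: derivative_eq_intros)
  from vector_diff_chain_within[OF this, of "\<lambda>s. U s *v y"]
  show ?thesis
    using propagator_has_vector_derivative[of H \<tau> U "\<tau> - t" y] assms reflect
    by (simp add: o_def scaleR_eq_smult vector_smult_assoc) (metis minus_minus)
qed

text \<open>Anti-linearity of \<open>\<Theta>\<close> turns the factor \<open>-\<i>\<close> of the evolution equation into \<open>\<i>\<close>.\<close>
lemma antiunitary_conj_propagator_has_vector_derivative:
  assumes T: "antiunitary \<Theta>" and T_sq: "\<forall>x. \<Theta> (\<Theta> x) = x"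
    and P: "propagator (\<lambda>t. cmatrix (\<lambda>x. \<Theta> (K t *v \<Theta> x))) \<tau> U" and t: "t \<in> {0..\<tau>}"
  shows "((\<lambda>s. \<Theta> (U s *v \<Theta> x)) has_vector_derivative \<i> *s (K t *v \<Theta> (U t *v \<Theta> x)))
           (at t within {0..\<tau>})"
proof (rule has_vector_derivative_eq_rhs)
  show "((\<lambda>s. \<Theta> (U s *v \<Theta> x)) has_vector_derivative
      \<Theta> ((- \<i>) *s (cmatrix (\<lambda>x. \<Theta> (K t *v \<Theta> x)) *v (U t *v \<Theta> x)))) (at t within {0..\<tau>})"
    by (rule bounded_linear.has_vector_derivative[OF antiunitary_bounded_linear[OF T]
          propagator_has_vector_derivative[OF P t]])
  have "\<Theta> (c *s v) = cnj c *s \<Theta> v" for c v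
    using T by (simp add: antiunitary_def)
  then show "\<Theta> ((- \<i>) *s (cmatrix (\<lambda>x. \<Theta> (K t *v \<Theta> x)) *v (U t *v \<Theta> x)))
      = \<i> *s (K t *v \<Theta> (U t *v \<Theta> x))"
    using T_sq by (simp only: cmatrix_antiunitary_conj[OF T]) simp
qed

lemma propagator_unitary:
  assumes P: "propagator H \<tau> U" and herm: "\<forall>t\<in>{0..\<tau>}. hermitian (H t)" and t: "t \<in> {0..\<tau>}"
  shows "cinner (U t *v x) (U t *v y) = cinner x y"
proof -
  have "((\<lambda>s. cinner (U s *v x) (U s *v y)) has_vector_derivative 0) (at s within {0..\<tau>})"
    if s: "s \<in> {0..\<tau>}" for s
  proof (rule has_vector_derivative_eq_rhs)
    show "((\<lambda>s. cinner (U s *v x) (U s *v y)) has_vector_derivative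
        cinner (U s *v x) ((- \<i>) *s (H s *v (U s *v y))) + cinner ((- \<i>) *s (H s *v (U s *v x))) (U s *v y))
        (at s within {0..\<tau>})"
      by (rule bounded_bilinear.has_vector_derivative[OF bounded_bilinear_cinner
          propagator_has_vector_derivative[OF P s] propagator_has_vector_derivative[OF P s]])
    show "cinner (U s *v x) ((- \<i>) *s (H s *v (U s *v y))) + cinner ((- \<i>) *s (H s *v (U s *v x))) (U s *v y) = 0"
      using cinner_hermitian[of "H s" "U s *v x" "U s *v y"] herm s
      by (simp only: cinner_smult_left cinner_smult_right) simp
  qed
  from has_vector_derivative_zero_constant[OF convex_real_interval(5) this]
  obtain c where "\<And>s. s \<in> {0..\<tau>} \<Longrightarrow> cinner (U s *v x) (U s *v y) = c" by blast
  moreover have "0 \<in> {0..\<tau>}" using t by auto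
  ultimately show ?thesis using t P by (metis matrix_vector_mul_lid propagator_def)
qed
text \<open>\<open>\<langle>U(\<tau>-t) y | \<Theta> \<tilde>U(t) \<Theta> x\<rangle>\<close> is constant in \<open>t\<close>, because \<open>H\<close> is Hermitian.\<close>
lemma propagator_time_reversal:
  assumes P: "propagator H \<tau> U" and herm: "\<forall>t\<in>{0..\<tau>}. hermitian (H t)"
    and T: "antiunitary \<Theta>" and T_sq: "\<forall>x. \<Theta> (\<Theta> x) = x"
    and P_rev: "propagator (\<lambda>t. cmatrix (\<lambda>x. \<Theta> (H (\<tau> - t) *v \<Theta> x))) \<tau> U_rev"
    and tau: "0 \<le> \<tau>"
  shows "cinner (\<Theta> x) (U_rev \<tau> *v \<Theta> y) = cinner y (U \<tau> *v x)"
proof -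
  define g where "g t = cinner (U (\<tau> - t) *v x) (\<Theta> (U_rev t *v \<Theta> y))" for t
  have "(g has_vector_derivative 0) (at t within {0..\<tau>})" if t: "t \<in> {0..\<tau>}" for t
  proof -
    have "hermitian (H (\<tau> - t))" using herm t by auto
    then have "cinner (\<i> *s (H (\<tau> - t) *v (U (\<tau> - t) *v x))) (\<Theta> (U_rev t *v \<Theta> y))
        + cinner (U (\<tau> - t) *v x) (\<i> *s (H (\<tau> - t) *v \<Theta> (U_rev t *v \<Theta> y))) = 0"
      by (simp add: cinner_hermitian cinner_smult_left cinner_smult_right)
    with bounded_bilinear.has_vector_derivative[OF bounded_bilinear_cinner
          propagator_reversed_has_vector_derivative[OF P t, of x]
          antiunitary_conj_propagator_has_vector_derivative[OF T T_sq P_rev t, of y]]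
    show ?thesis unfolding g_def by (simp add: add.commute)
  qed
  from has_vector_derivative_zero_constant[OF convex_real_interval(5) this]
  obtain c where "\<And>s. s \<in> {0..\<tau>} \<Longrightarrow> g s = c" by blast
  then have "g \<tau> = g 0" using tau by auto
  then have "cinner x (\<Theta> (U_rev \<tau> *v \<Theta> y)) = cinner (U \<tau> *v x) y"
    using P P_rev T_sq by (simp add: g_def propagator_def)
  then show ?thesis
    using T T_sq unfolding antiunitary_def
    by (metis cinner_commute_cnj)
qed

section \<open>Relative entropy of two spectral decompositions\<close>

lemma kl_term_mult_common:
  assumes "x \<ge> 0" "y \<ge> 0" "c \<ge> 0" "c * x \<noteq> 0 \<Longrightarrow> y \<noteq> 0"
  shows "kl_term (c * x) (c * y) = ereal (c * x * ln x - c * x * ln y)"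
proof (cases "c * x = 0")
  case False
  then have "y > 0" "x > 0" "c > 0" using assms by auto
  then show ?thesis using False by (simp add: kl_term_def ln_div ln_mult right_diff_distrib)
qed (simp add: kl_term_def)

text \<open>For a stochastic matrix \<open>n\<close> the joint distribution \<open>n(a,b) p(a)\<close> has first marginal \<open>p\<close>,
  so the \<open>ln p(a)\<close> part of the divergence collapses to the entropy term.\<close>
lemma sum_kl_term_stochastic:
  fixes n :: "'a::finite \<Rightarrow> 'b::finite \<Rightarrow> real"
  assumes n_nonneg: "\<And>a b. n a b \<ge> 0" and rows: "\<And>a. (\<Sum>b\<in>UNIV. n a b) = 1"
    and p_nonneg: "\<And>a. p a \<ge> 0" and q_nonneg: "\<And>b. q b \<ge> 0"
    and supp: "\<And>a b. p a \<noteq> 0 \<Longrightarrow> n a b \<noteq> 0 \<Longrightarrow> q b \<noteq> 0"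
  shows "(\<Sum>a\<in>UNIV. \<Sum>b\<in>UNIV. kl_term (n a b * p a) (n a b * q b))
       = ereal ((\<Sum>a\<in>UNIV. p a * ln (p a)) - (\<Sum>b\<in>UNIV. ln (q b) * (\<Sum>a\<in>UNIV. p a * n a b)))"
proof -
  have "kl_term (n a b * p a) (n a b * q b) = ereal (n a b * p a * ln (p a) - n a b * p a * ln (q b))"
    for a b using n_nonneg p_nonneg q_nonneg supp by (intro kl_term_mult_common) auto
  then have "(\<Sum>a\<in>UNIV. \<Sum>b\<in>UNIV. kl_term (n a b * p a) (n a b * q b))
      = ereal ((\<Sum>a\<in>UNIV. \<Sum>b\<in>UNIV. n a b * p a * ln (p a)) - (\<Sum>a\<in>UNIV. \<Sum>b\<in>UNIV. n a b * p a * ln (q b)))"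
    by (simp add: sum_subtractf)
  also have "(\<Sum>a\<in>UNIV. \<Sum>b\<in>UNIV. n a b * p a * ln (p a)) = (\<Sum>a\<in>UNIV. p a * ln (p a))"
    by (simp add: sum_distrib_right[symmetric] rows)
  also have "(\<Sum>a\<in>UNIV. \<Sum>b\<in>UNIV. n a b * p a * ln (q b)) = (\<Sum>b\<in>UNIV. ln (q b) * (\<Sum>a\<in>UNIV. p a * n a b))"
    by (subst sum.swap) (simp add: sum_distrib_left mult_ac)
  finally show ?thesis .
qed

lemma spectral_op_support_violation_iff:
  assumes \<phi>: "orthonormal_basis \<phi>" and p_nonneg: "\<And>a. p a \<ge> 0"
  shows "(\<exists>w. spectral_op q \<phi> *v w = 0 \<and> cinner w (spectral_op p e *v w) \<noteq> 0)
     \<longleftrightarrow> (\<exists>a b. p a \<noteq> 0 \<and> cinner (\<phi> b) (e a) \<noteq> 0 \<and> q b = 0)"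
proof
  assume "\<exists>w. spectral_op q \<phi> *v w = 0 \<and> cinner w (spectral_op p e *v w) \<noteq> 0"
  then obtain w where w: "spectral_op q \<phi> *v w = 0" "cinner w (spectral_op p e *v w) \<noteq> 0" by blast
  have "cinner w (spectral_op p e *v w) = (\<Sum>a\<in>UNIV. (of_real (p a) * cinner (e a) w) * cinner w (e a))"
    by (simp add: spectral_op_mult_vector cinner_sum_right cinner_smult_right)
  then obtain a where a: "p a \<noteq> 0" "cinner (e a) w \<noteq> 0"
    using w(2) by (metis (no_types, lifting) mult_eq_0_iff of_real_0 sum.neutral)
  have "cinner (e a) w = (\<Sum>b\<in>UNIV. cinner (\<phi> b) w * cinner (e a) (\<phi> b))"
    by (subst orthonormal_basis_expansion[OF \<phi>, of w]) (simp add: cinner_sum_right cinner_smult_right)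
  then obtain b where b: "cinner (\<phi> b) w \<noteq> 0" "cinner (e a) (\<phi> b) \<noteq> 0"
    using a(2) by (metis (no_types, lifting) mult_eq_0_iff sum.neutral)
  have "of_real (q b) * cinner (\<phi> b) w = 0"
    using cinner_spectral_op[OF \<phi>, of b q w] w(1) by simp
  then have "q b = 0" using b(1) by simp
  moreover have "cinner (\<phi> b) (e a) \<noteq> 0" using b(2) by (metis cinner_commute_cnj complex_cnj_zero)
  ultimately show "\<exists>a b. p a \<noteq> 0 \<and> cinner (\<phi> b) (e a) \<noteq> 0 \<and> q b = 0" using a(1) by blast
next
  assume "\<exists>a b. p a \<noteq> 0 \<and> cinner (\<phi> b) (e a) \<noteq> 0 \<and> q b = 0"
  then obtain a b where ab: "p a \<noteq> 0" "cinner (\<phi> b) (e a) \<noteq> 0" "q b = 0" by blast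
  have "p a * (cmod (cinner (\<phi> b) (e a)))\<^sup>2 \<le> (\<Sum>a\<in>UNIV. p a * (cmod (cinner (\<phi> b) (e a)))\<^sup>2)"
    by (rule member_le_sum) (simp_all add: p_nonneg)
  moreover have "p a * (cmod (cinner (\<phi> b) (e a)))\<^sup>2 > 0"
    using ab p_nonneg[of a] by (simp add: less_le)
  ultimately have "cinner (\<phi> b) (spectral_op p e *v \<phi> b) \<noteq> 0"
    by (simp only: cinner_spectral_op_diag of_real_eq_0_iff)
  then show "\<exists>w. spectral_op q \<phi> *v w = 0 \<and> cinner w (spectral_op p e *v w) \<noteq> 0"
    using spectral_op_eigen[OF \<phi>, of q b] ab(3) by (intro exI[of _ "\<phi> b"]) simp
qed

lemma rel_entropy_spectral_op:
  assumes e: "orthonormal_basis e" and \<phi>: "orthonormal_basis \<phi>"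
    and supp: "\<not> (\<exists>w. spectral_op q \<phi> *v w = 0 \<and> cinner w (spectral_op p e *v w) \<noteq> 0)"
  shows "rel_entropy (spectral_op p e) (spectral_op q \<phi>)
       = ereal ((\<Sum>a\<in>UNIV. p a * ln (p a))
           - (\<Sum>b\<in>UNIV. ln (q b) * (\<Sum>a\<in>UNIV. p a * (cmod (cinner (\<phi> b) (e a)))\<^sup>2)))"
  using supp
  by (simp add: rel_entropy_def mfun_spectral_op[OF e] mfun_spectral_op[OF \<phi>] ctrace_spectral_op[OF e]
      ctrace_mult_spectral_op cinner_spectral_op_diag)

lemma sum_kl_term_eq_rel_entropy_spectral_op:
  assumes e: "orthonormal_basis e" and \<phi>: "orthonormal_basis \<phi>"
    and p_nonneg: "\<And>a. p a \<ge> 0" and q_nonneg: "\<And>b. q b \<ge> 0"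
  shows "(\<Sum>a\<in>UNIV. \<Sum>b\<in>UNIV. kl_term ((cmod (cinner (\<phi> b) (e a)))\<^sup>2 * p a)
                                       ((cmod (cinner (\<phi> b) (e a)))\<^sup>2 * q b))
       = rel_entropy (spectral_op p e) (spectral_op q \<phi>)"
proof (cases "\<exists>a b. p a \<noteq> 0 \<and> cinner (\<phi> b) (e a) \<noteq> 0 \<and> q b = 0")
  case True
  then obtain a b where "p a \<noteq> 0" "cinner (\<phi> b) (e a) \<noteq> 0" "q b = 0" by blast
  then have "kl_term ((cmod (cinner (\<phi> b) (e a)))\<^sup>2 * p a) ((cmod (cinner (\<phi> b) (e a)))\<^sup>2 * q b) = \<infinity>"
    by (simp add: kl_term_def)
  then have "(\<Sum>a\<in>UNIV. \<Sum>b\<in>UNIV. kl_term ((cmod (cinner (\<phi> b) (e a)))\<^sup>2 * p a)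
                                       ((cmod (cinner (\<phi> b) (e a)))\<^sup>2 * q b)) = \<infinity>"
    by (auto simp: sum_Pinfty)
  with True show ?thesis
    by (simp add: rel_entropy_def spectral_op_support_violation_iff[OF \<phi> p_nonneg])
next
  case False
  have "complex_of_real (\<Sum>b\<in>UNIV. (cmod (cinner (\<phi> b) (e a)))\<^sup>2) = 1" for a
    using parseval[OF \<phi>, of "e a"] e by (simp add: orthonormal_basis_def)
  then have rows: "(\<Sum>b\<in>UNIV. (cmod (cinner (\<phi> b) (e a)))\<^sup>2) = 1" for a
    by (metis of_real_eq_1_iff)
  have "(\<Sum>a\<in>UNIV. \<Sum>b\<in>UNIV. kl_term ((cmod (cinner (\<phi> b) (e a)))\<^sup>2 * p a)
                                       ((cmod (cinner (\<phi> b) (e a)))\<^sup>2 * q b))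
      = ereal ((\<Sum>a\<in>UNIV. p a * ln (p a))
          - (\<Sum>b\<in>UNIV. ln (q b) * (\<Sum>a\<in>UNIV. p a * (cmod (cinner (\<phi> b) (e a)))\<^sup>2)))"
    using False by (intro sum_kl_term_stochastic rows p_nonneg q_nonneg) auto
  with False show ?thesis
    by (simp add: rel_entropy_spectral_op[OF e \<phi>] spectral_op_support_violation_iff[OF \<phi> p_nonneg])
qed

theorem theorem5p3:
  fixes pi p0 :: "'n::finite \<Rightarrow> real"
    and \<psi> \<phi> :: "'n \<Rightarrow> complex^'n"
    and H :: "real \<Rightarrow> complex^'n^'n"
    and \<tau> :: real
    and Uf Utf :: "real \<Rightarrow> complex^'n^'n"
    and \<Theta> :: "complex^'n \<Rightarrow> complex^'n"
  assumes pi_nonneg: "\<forall>a. pi a \<ge> 0" and pi_sum: "(\<Sum>a\<in>UNIV. pi a) = 1"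
    and p0_nonneg: "\<forall>b. p0 b \<ge> 0" and p0_sum: "(\<Sum>b\<in>UNIV. p0 b) = 1"
    and onb_psi: "orthonormal_basis \<psi>" and onb_phi: "orthonormal_basis \<phi>"
    and tau: "0 \<le> \<tau>"
    and H_cont: "continuous_on {0..\<tau>} H"
    and H_herm: "\<forall>t\<in>{0..\<tau>}. hermitian (H t)"
    and U_prop: "propagator H \<tau> Uf"
    and Theta: "antiunitary \<Theta>" and Theta_sq: "\<forall>x. \<Theta> (\<Theta> x) = x"
    and Ut_prop: "propagator (\<lambda>t. cmatrix (\<lambda>x. \<Theta> (H (\<tau> - t) *v \<Theta> x))) \<tau> Utf"
  shows "(\<Sum>a\<in>UNIV. \<Sum>b\<in>UNIV.
            kl_term ((cmod (cinner (\<phi> b) (Uf \<tau> *v \<psi> a)))\<^sup>2 * pi a)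
                    ((cmod (cinner (\<Theta> (\<psi> a)) (Utf \<tau> *v \<Theta> (\<phi> b))))\<^sup>2 * p0 b))
         = rel_entropy (Uf \<tau> ** spectral_op pi \<psi> ** adjoint_mat (Uf \<tau>)) (spectral_op p0 \<phi>)"
proof -
  define V where "V a = Uf \<tau> *v \<psi> a" for a
  have "orthonormal_basis V"
    using onb_psi propagator_unitary[OF U_prop H_herm, of \<tau>] tau
    by (simp add: orthonormal_basis_def V_def)
  moreover have "cinner (\<Theta> (\<psi> a)) (Utf \<tau> *v \<Theta> (\<phi> b)) = cinner (\<phi> b) (V a)" for a b
    unfolding V_def by (rule propagator_time_reversal[OF U_prop H_herm Theta Theta_sq Ut_prop tau])
  moreover have "Uf \<tau> ** spectral_op pi \<psi> ** adjoint_mat (Uf \<tau>) = spectral_op pi V"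
    unfolding V_def by (rule spectral_op_conj)
  ultimately show ?thesis
    using sum_kl_term_eq_rel_entropy_spectral_op[OF _ onb_phi, of V pi p0] pi_nonneg p0_nonneg
    by (simp add: V_def)
qed

end
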